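(* Let $X_1,X_2$ be connected graphs, each with at least two vertices, $X=X_1\square X_2$, and let $F_{-2}$ be the orthogonal projection onto the $(-2)$-eigenspace of the adjacency matrix of $\mathcal L(X)$. Let $\varepsilon_1\neq\varepsilon_2$ be edges of $X$. Then $F_{-2}\mathbf h_{\varepsilon_1}=\pm F_{-2}\mathbf h_{\varepsilon_2}$ (for some sign) if and only if, up to interchanging the roles of $X_1$ and $X_2$ and of $\varepsilon_1,\varepsilon_2$, one of the following holds: (i) $X_2=K_2$ with $V(X_2)=\{1,2\}$, and there is an edge $\{a,b\}$ of $X_1$ with $-2\notin\Lambda_{\mathbf f_{ab}}$ such that $\varepsilon_1$ joins $(a,1)$ and $(b,1)$ and $\varepsilon_2$ joins $(a,2)$ and $(b,2)$; (ii) there are a pendant vertex $a$ of $X_1$ with its edge $\{a,b\}\in E(X_1)$ and a pendant vertex $\alpha$ of $X_2$ with its edge $\{\alpha,\beta\}\in E(X_2)$, with $-2\notin\Lambda_{\mathbf f_{ab}}$ and $-2\notin\Lambda_{\mathbf f_{\alpha\beta}}$, such that $\varepsilon_1$ joins $(a,\alpha)$ and $(a,\beta)$ and $\varepsilon_2$ joins $(a,\alpha)$ and $(b,\alpha)$. Moreover, in case (i) $F_{-2}\mathbf h_{\varepsilon_1}=F_{-2}\mathbf h_{\varepsilon_2}\ne\mathbf 0$, and in case (ii) $F_{-2}\mathbf h_{\varepsilon_1}=-F_{-2}\mathbf h_{\varepsilon_2}\neq\mathbf 0$.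
   Context: $X_1\square X_2$ is the Cartesian product: vertex set $V(X_1)\times V(X_2)$, with $(x,y)\sim(x',y')$ iff ($x=x'$ and $y\sim y'$) or ($y=y'$ and $x\sim x'$). The line graph $\mathcal L(Y)$ has vertex set $E(Y)$, edges adjacent iff they share an endpoint. For an edge $\varepsilon$ of $X$, $\mathbf h_\varepsilon$ is the standard basis vector of the corresponding vertex of $\mathcal L(X)$. For $\{a,b\}\in E(X_j)$, $\mathbf f_{ab}$ is the vertex state of $\mathcal L(X_j)$ and $\Lambda_{\mathbf f_{ab}}$ its eigenvalue support with respect to the adjacency matrix of $\mathcal L(X_j)$ (set of eigenvalues $\theta$ whose spectral projection does not annihilate $\mathbf f_{ab}$). A pendant vertex is a vertex of degree one. *)

theory Defs
  imports Complex_Main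
begin

definition is_graph :: "'a set \<Rightarrow> 'a set set \<Rightarrow> bool" where
  "is_graph V E \<longleftrightarrow> finite V \<and> (\<forall>e\<in>E. \<exists>x y. x \<in> V \<and> y \<in> V \<and> x \<noteq> y \<and> e = {x, y})"

definition adj :: "'a set set \<Rightarrow> 'a \<Rightarrow> 'a \<Rightarrow> bool" where
  "adj E x y \<longleftrightarrow> {x, y} \<in> E"

definition connected_graph :: "'a set \<Rightarrow> 'a set set \<Rightarrow> bool" where
  "connected_graph V E \<longleftrightarrow> is_graph V E \<and> V \<noteq> {} \<and> (\<forall>x\<in>V. \<forall>y\<in>V. (adj E)\<^sup>*\<^sup>* x y)"

definition degree :: "'a set set \<Rightarrow> 'a \<Rightarrow> nat" where
  "degree E x = card {y. {x, y} \<in> E}"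

definition pendant :: "'a set \<Rightarrow> 'a set set \<Rightarrow> 'a \<Rightarrow> bool" where
  "pendant V E x \<longleftrightarrow> x \<in> V \<and> degree E x = 1"

definition cart_E :: "'a set \<Rightarrow> 'a set set \<Rightarrow> 'b set \<Rightarrow> 'b set set \<Rightarrow> ('a \<times> 'b) set set" where
  "cart_E V1 E1 V2 E2 =
     {{(x, y), (x, y')} | x y y'. x \<in> V1 \<and> {y, y'} \<in> E2} \<union>
     {{(x, y), (x', y)} | x x' y. y \<in> V2 \<and> {x, x'} \<in> E1}"

definition line_adj :: "'a set set \<Rightarrow> 'a set \<Rightarrow> 'a set \<Rightarrow> real" where
  "line_adj E e e' = (if e \<in> E \<and> e' \<in> E \<and> e \<noteq> e' \<and> e \<inter> e' \<noteq> {} then 1 else 0)"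

(* Real vectors indexed by a finite set S: functions vanishing outside S *)
definition vec_on :: "'i set \<Rightarrow> ('i \<Rightarrow> real) \<Rightarrow> bool" where
  "vec_on S v \<longleftrightarrow> (\<forall>x. x \<notin> S \<longrightarrow> v x = 0)"

definition inner_on :: "'i set \<Rightarrow> ('i \<Rightarrow> real) \<Rightarrow> ('i \<Rightarrow> real) \<Rightarrow> real" where
  "inner_on S u v = (\<Sum>x\<in>S. u x * v x)"

definition mat_vec :: "'i set \<Rightarrow> ('i \<Rightarrow> 'i \<Rightarrow> real) \<Rightarrow> ('i \<Rightarrow> real) \<Rightarrow> ('i \<Rightarrow> real)" where
  "mat_vec S M v = (\<lambda>x. if x \<in> S then (\<Sum>y\<in>S. M x y * v y) else 0)"

definition eigenspace_on :: "'i set \<Rightarrow> ('i \<Rightarrow> 'i \<Rightarrow> real) \<Rightarrow> real \<Rightarrow> ('i \<Rightarrow> real) set" where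
  "eigenspace_on S M \<theta> = {v. vec_on S v \<and> mat_vec S M v = (\<lambda>x. \<theta> * v x)}"

definition orth_proj :: "'i set \<Rightarrow> ('i \<Rightarrow> real) set \<Rightarrow> ('i \<Rightarrow> real) \<Rightarrow> ('i \<Rightarrow> real)" where
  "orth_proj S W h = (THE p. p \<in> W \<and> (\<forall>w\<in>W. inner_on S (\<lambda>x. h x - p x) w = 0))"

definition line_proj :: "'a set set \<Rightarrow> real \<Rightarrow> ('a set \<Rightarrow> real) \<Rightarrow> ('a set \<Rightarrow> real)" where
  "line_proj E \<theta> h = orth_proj E (eigenspace_on E (line_adj E) \<theta>) h"

definition std_basis :: "'i \<Rightarrow> ('i \<Rightarrow> real)" where
  "std_basis \<epsilon> = (\<lambda>e. if e = \<epsilon> then 1 else 0)"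

definition eig_support :: "'a set set \<Rightarrow> ('a set \<Rightarrow> real) \<Rightarrow> real set" where
  "eig_support E f = {\<theta>. line_proj E \<theta> f \<noteq> (\<lambda>_. 0)}"

definition case_i_base :: "'a set \<Rightarrow> 'a set set \<Rightarrow> 'b set \<Rightarrow> 'b set set \<Rightarrow> ('a \<times> 'b) set \<Rightarrow> ('a \<times> 'b) set \<Rightarrow> bool" where
  "case_i_base V1 E1 V2 E2 \<epsilon>1 \<epsilon>2 \<longleftrightarrow>
     (\<exists>u v. u \<noteq> v \<and> V2 = {u, v} \<and> E2 = {{u, v}} \<and>
        (\<exists>a b. {a, b} \<in> E1 \<and> -2 \<notin> eig_support E1 (std_basis {a, b}) \<and>
               \<epsilon>1 = {(a, u), (b, u)} \<and> \<epsilon>2 = {(a, v), (b, v)}))"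

definition case_i_swap :: "'a set \<Rightarrow> 'a set set \<Rightarrow> 'b set \<Rightarrow> 'b set set \<Rightarrow> ('a \<times> 'b) set \<Rightarrow> ('a \<times> 'b) set \<Rightarrow> bool" where
  "case_i_swap V1 E1 V2 E2 \<epsilon>1 \<epsilon>2 \<longleftrightarrow>
     (\<exists>u v. u \<noteq> v \<and> V1 = {u, v} \<and> E1 = {{u, v}} \<and>
        (\<exists>a b. {a, b} \<in> E2 \<and> -2 \<notin> eig_support E2 (std_basis {a, b}) \<and>
               \<epsilon>1 = {(u, a), (u, b)} \<and> \<epsilon>2 = {(v, a), (v, b)}))"

definition case_i :: "'a set \<Rightarrow> 'a set set \<Rightarrow> 'b set \<Rightarrow> 'b set set \<Rightarrow> ('a \<times> 'b) set \<Rightarrow> ('a \<times> 'b) set \<Rightarrow> bool" where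
  "case_i V1 E1 V2 E2 \<epsilon>1 \<epsilon>2 \<longleftrightarrow>
     case_i_base V1 E1 V2 E2 \<epsilon>1 \<epsilon>2 \<or> case_i_base V1 E1 V2 E2 \<epsilon>2 \<epsilon>1 \<or>
     case_i_swap V1 E1 V2 E2 \<epsilon>1 \<epsilon>2 \<or> case_i_swap V1 E1 V2 E2 \<epsilon>2 \<epsilon>1"

definition case_ii_base :: "'a set \<Rightarrow> 'a set set \<Rightarrow> 'b set \<Rightarrow> 'b set set \<Rightarrow> ('a \<times> 'b) set \<Rightarrow> ('a \<times> 'b) set \<Rightarrow> bool" where
  "case_ii_base V1 E1 V2 E2 \<epsilon>1 \<epsilon>2 \<longleftrightarrow>
     (\<exists>a b \<alpha> \<beta>. pendant V1 E1 a \<and> {a, b} \<in> E1 \<and> pendant V2 E2 \<alpha> \<and> {\<alpha>, \<beta>} \<in> E2 \<and>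
        -2 \<notin> eig_support E1 (std_basis {a, b}) \<and> -2 \<notin> eig_support E2 (std_basis {\<alpha>, \<beta>}) \<and>
        \<epsilon>1 = {(a, \<alpha>), (a, \<beta>)} \<and> \<epsilon>2 = {(a, \<alpha>), (b, \<alpha>)})"

(* Case (ii), second orientation: interchanging the roles of X1 and X2 is, in the
   coordinates of X1 \<box> X2, the same as interchanging eps1 and eps2 *)
definition case_ii :: "'a set \<Rightarrow> 'a set set \<Rightarrow> 'b set \<Rightarrow> 'b set set \<Rightarrow> ('a \<times> 'b) set \<Rightarrow> ('a \<times> 'b) set \<Rightarrow> bool" where
  "case_ii V1 E1 V2 E2 \<epsilon>1 \<epsilon>2 \<longleftrightarrow>
     case_ii_base V1 E1 V2 E2 \<epsilon>1 \<epsilon>2 \<or> case_ii_base V1 E1 V2 E2 \<epsilon>2 \<epsilon>1"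

end

theory Submission
  imports Defs
begin

text \<open>
  Write \<open>K(Y)\<close> for the kernel of the unsigned vertex--edge incidence matrix \<open>B\<close> of a graph \<open>Y\<close>,
  i.e.\ the edge weightings with zero sum at every vertex. Since the adjacency matrix of \<open>L(Y)\<close> is
  \<open>B\<^sup>T B - 2 I\<close>, the \<open>(-2)\<close>-eigenspace of \<open>L(Y)\<close> is \<open>K(Y)\<close>, and so
  \<open>F h\<^sub>\<epsilon>\<^sub>1 = c F h\<^sub>\<epsilon>\<^sub>2\<close> holds exactly when \<open>w(\<epsilon>\<^sub>1) = c w(\<epsilon>\<^sub>2)\<close> for all \<open>w \<in> K(X)\<close>.

  For \<open>X = X\<^sub>1 \<box> X\<^sub>2\<close>, \<open>K(X)\<close> contains the alternating \<open>\<plusminus>1\<close> weighting of every 4-cycle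
  \<open>{x, x'} \<times> {y, y'}\<close> and every \<open>w\<^sub>1 \<in> K(X\<^sub>1)\<close> copied onto a layer \<open>X\<^sub>1 \<times> {y}\<close>; if \<open>X\<^sub>2 = K\<^sub>2\<close>, the
  difference of the two layers of any \<open>w \<in> K(X)\<close> lies in \<open>K(X\<^sub>1)\<close>. Testing the proportionality
  of \<open>\<epsilon>\<^sub>1\<close> and \<open>\<epsilon>\<^sub>2\<close> against the 4-cycles through \<open>\<epsilon>\<^sub>1\<close> forces pendant vertices and one of the
  configurations (i), (ii), and the layer copies force the support conditions. Conversely, a
  pendant edge has weight \<open>0\<close> in every \<open>w \<in> K\<close>, and the two edges at a vertex of degree 2 carry
  opposite weights. Interchanging the factors reduces everything to an edge \<open>\<epsilon>\<^sub>1\<close> inside a layer.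
\<close>

section \<open>Orthogonal projections\<close>

definition fun_subspace :: "('i \<Rightarrow> real) set \<Rightarrow> bool" where
  "fun_subspace W \<longleftrightarrow> (\<lambda>_. 0) \<in> W \<and> (\<forall>u\<in>W. \<forall>v\<in>W. (\<lambda>x. u x + v x) \<in> W)
     \<and> (\<forall>c. \<forall>u\<in>W. (\<lambda>x. c * u x) \<in> W)"

lemma fun_subspace_zero: "fun_subspace W \<Longrightarrow> (\<lambda>_. 0) \<in> W"
  and fun_subspace_add: "fun_subspace W \<Longrightarrow> u \<in> W \<Longrightarrow> v \<in> W \<Longrightarrow> (\<lambda>x. u x + v x) \<in> W"
  and fun_subspace_scale: "fun_subspace W \<Longrightarrow> u \<in> W \<Longrightarrow> (\<lambda>x. c * u x) \<in> W"
  unfolding fun_subspace_def by blast+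

lemma fun_subspace_diff:
  assumes "fun_subspace W" "u \<in> W" "v \<in> W"
  shows "(\<lambda>x. u x - v x) \<in> W"
  using fun_subspace_add[OF assms(1,2) fun_subspace_scale[OF assms(1,3), of "-1"]] by simp

lemma inner_on_add_left: "inner_on S (\<lambda>x. u x + v x) w = inner_on S u w + inner_on S v w"
  and inner_on_diff_left: "inner_on S (\<lambda>x. u x - v x) w = inner_on S u w - inner_on S v w"
  and inner_on_scale_left: "inner_on S (\<lambda>x. c * u x) w = c * inner_on S u w"
  and inner_on_add_right: "inner_on S w (\<lambda>x. u x + v x) = inner_on S w u + inner_on S w v"
  and inner_on_scale_right: "inner_on S w (\<lambda>x. c * u x) = c * inner_on S w u"
  and inner_on_commute: "inner_on S u v = inner_on S v u"
  unfolding inner_on_def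
  by (simp_all add: algebra_simps sum.distrib sum_subtractf sum_distrib_left)

lemma inner_on_self_eq_0_iff:
  assumes "finite S"
  shows "inner_on S u u = 0 \<longleftrightarrow> (\<forall>x\<in>S. u x = 0)"
  using sum_nonneg_eq_0_iff[OF assms, of "\<lambda>x. u x * u x"] unfolding inner_on_def by simp

lemma inner_on_std_basis:
  assumes "finite S" "\<epsilon> \<in> S"
  shows "inner_on S (std_basis \<epsilon>) w = w \<epsilon>"
proof -
  have "inner_on S (std_basis \<epsilon>) w = (\<Sum>x\<in>S. if x = \<epsilon> then w x else 0)"
    unfolding inner_on_def std_basis_def by (intro sum.cong) auto
  then show ?thesis using assms by simp
qed

text \<open>If some \<open>c \<in> W\<close> is nonzero at \<open>t\<close>, it can be chosen orthogonal to the hyperplane section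
  \<open>W\<^sub>0\<close> of \<open>W\<close> at \<open>t\<close>, and then \<open>W = W\<^sub>0 \<oplus> \<real> c\<close>.\<close>
lemma orth_proj_exists_step:
  assumes S: "finite S" "t \<in> S" and W: "fun_subspace W"
    and IH: "\<And>h. \<exists>p\<in>{w\<in>W. w t = 0}. \<forall>w\<in>{w\<in>W. w t = 0}. inner_on S (\<lambda>x. h x - p x) w = 0"
  shows "\<exists>p\<in>W. \<forall>w\<in>W. inner_on S (\<lambda>x. h x - p x) w = 0"
proof (cases "\<forall>w\<in>W. w t = 0")
  case True
  then have "{w\<in>W. w t = 0} = W" by auto
  then show ?thesis using IH[of h] by auto
next
  case False
  define W0 where "W0 = {w\<in>W. w t = 0}"
  obtain b where b: "b \<in> W" "b t \<noteq> 0" using False by auto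
  obtain q where q: "q \<in> W0" "\<forall>w\<in>W0. inner_on S (\<lambda>x. b x - q x) w = 0"
    using IH[of b] unfolding W0_def by blast
  define c where "c = (\<lambda>x. b x - q x)"
  have cW: "c \<in> W" unfolding c_def using fun_subspace_diff[OF W b(1)] q(1) W0_def by auto
  have ct: "c t \<noteq> 0" using q(1) b(2) unfolding W0_def c_def by auto
  have c_orth: "\<forall>w\<in>W0. inner_on S c w = 0" using q(2) unfolding c_def by auto
  have cc: "inner_on S c c \<noteq> 0" using inner_on_self_eq_0_iff[OF S(1), of c] ct S(2) by auto
  obtain p0 where p0: "p0 \<in> W0" "\<forall>w\<in>W0. inner_on S (\<lambda>x. h x - p0 x) w = 0"
    using IH[of h] unfolding W0_def by blast
  define a where "a = inner_on S (\<lambda>x. h x - p0 x) c / inner_on S c c"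
  define p where "p = (\<lambda>x. p0 x + a * c x)"
  have pW: "p \<in> W"
    unfolding p_def using p0(1) W0_def fun_subspace_add[OF W] fun_subspace_scale[OF W cW] by auto
  have res: "(\<lambda>x. h x - p x) = (\<lambda>x. (h x - p0 x) - a * c x)" unfolding p_def by (auto simp: algebra_simps)
  have res_c: "inner_on S (\<lambda>x. h x - p x) c = 0"
    unfolding res inner_on_diff_left inner_on_scale_left a_def using cc by simp
  have res_W0: "inner_on S (\<lambda>x. h x - p x) w = 0" if "w \<in> W0" for w
    unfolding res inner_on_diff_left inner_on_scale_left
    using p0(2) that c_orth inner_on_commute[of S c w] by (simp add: inner_on_diff_left)
  have "inner_on S (\<lambda>x. h x - p x) w = 0" if w: "w \<in> W" for w
  proof -
    define \<mu> where "\<mu> = w t / c t"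
    define w0 where "w0 = (\<lambda>x. w x - \<mu> * c x)"
    have "w0 \<in> W" unfolding w0_def using fun_subspace_diff[OF W w fun_subspace_scale[OF W cW]] by simp
    moreover have "w0 t = 0" unfolding w0_def \<mu>_def using ct by simp
    ultimately have w0: "w0 \<in> W0" unfolding W0_def by auto
    have "w = (\<lambda>x. w0 x + \<mu> * c x)" unfolding w0_def by auto
    then show ?thesis
      using res_c res_W0[OF w0] by (simp add: inner_on_add_right inner_on_scale_right)
  qed
  then show ?thesis using pW by blast
qed

lemma orth_proj_exists:
  assumes S: "finite S" and T: "finite T"
  shows "T \<subseteq> S \<Longrightarrow> fun_subspace W \<Longrightarrow> \<forall>w\<in>W. vec_on T w \<Longrightarrow>
     \<exists>p\<in>W. \<forall>w\<in>W. inner_on S (\<lambda>x. h x - p x) w = 0"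
  using T
proof (induction T arbitrary: W h rule: finite_induct)
  case empty
  then have "\<forall>w\<in>W. w = (\<lambda>_. 0)" unfolding vec_on_def by auto
  then have "\<forall>w\<in>W. inner_on S (\<lambda>x. h x - 0) w = 0" unfolding inner_on_def by auto
  then show ?case using fun_subspace_zero[OF empty(2)] by (intro bexI[of _ "\<lambda>_. 0"]) simp_all
next
  case (insert t T)
  have "T \<subseteq> S" "t \<in> S" using insert.prems(1) by simp_all
  moreover have "fun_subspace {w\<in>W. w t = 0}"
    using insert.prems(2) unfolding fun_subspace_def by auto
  moreover have "\<forall>w\<in>{w\<in>W. w t = 0}. vec_on T w" using insert.prems(3) unfolding vec_on_def by auto
  ultimately show ?case
    using orth_proj_exists_step[OF S _ insert.prems(2)] insert.IH by blast
qed

lemma orth_proj_unique: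
  assumes "finite S" "fun_subspace W" "\<forall>w\<in>W. vec_on S w"
    and p: "p \<in> W" "\<forall>w\<in>W. inner_on S (\<lambda>x. h x - p x) w = 0"
    and q: "q \<in> W" "\<forall>w\<in>W. inner_on S (\<lambda>x. h x - q x) w = 0"
  shows "p = q"
proof -
  define d where "d = (\<lambda>x. p x - q x)"
  have dW: "d \<in> W" unfolding d_def using fun_subspace_diff[OF assms(2) p(1) q(1)] .
  have "(\<lambda>x. h x - q x) = (\<lambda>x. (h x - p x) + d x)" unfolding d_def by auto
  then have "inner_on S d d = 0" using p(2) q(2) dW inner_on_add_left[of S "\<lambda>x. h x - p x" d d] by simp
  then have "\<forall>x\<in>S. d x = 0" using inner_on_self_eq_0_iff[OF assms(1)] by blast
  moreover have "p x = 0" "q x = 0" if "x \<notin> S" for x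
    using assms(3) p(1) q(1) that unfolding vec_on_def by blast+
  ultimately show ?thesis unfolding d_def by (metis eq_iff_diff_eq_0 ext)
qed

lemma orth_proj_eq_iff:
  assumes "finite S" "fun_subspace W" "\<forall>w\<in>W. vec_on S w"
  shows "orth_proj S W h = q \<longleftrightarrow> q \<in> W \<and> (\<forall>w\<in>W. inner_on S (\<lambda>x. h x - q x) w = 0)"
proof -
  obtain p where p: "p \<in> W" "\<forall>w\<in>W. inner_on S (\<lambda>x. h x - p x) w = 0"
    using orth_proj_exists[OF assms(1,1) order_refl assms(2,3)] by blast
  have "orth_proj S W h = p"
    unfolding orth_proj_def by (rule the_equality) (use p orth_proj_unique[OF assms] in blast)+
  then show ?thesis using p orth_proj_unique[OF assms p] by blast
qed

lemma orth_proj_eq_scale_iff: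
  assumes "finite S" "fun_subspace W" "\<forall>w\<in>W. vec_on S w"
  shows "orth_proj S W h = (\<lambda>x. c * orth_proj S W h' x)
     \<longleftrightarrow> (\<forall>w\<in>W. inner_on S h w = c * inner_on S h' w)"
proof -
  define p where "p = orth_proj S W h'"
  have p: "p \<in> W" "\<forall>w\<in>W. inner_on S p w = inner_on S h' w"
    using orth_proj_eq_iff[OF assms, of h' p] unfolding p_def by (auto simp: inner_on_diff_left)
  show ?thesis
    unfolding p_def[symmetric] orth_proj_eq_iff[OF assms]
    using fun_subspace_scale[OF assms(2) p(1)] p(2) by (auto simp: inner_on_diff_left inner_on_scale_left)
qed

lemma orth_proj_std_basis_eq_scale_iff:
  assumes "finite S" "fun_subspace W" "\<forall>w\<in>W. vec_on S w" "\<epsilon> \<in> S" "\<epsilon>' \<in> S"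
  shows "orth_proj S W (std_basis \<epsilon>) = (\<lambda>x. c * orth_proj S W (std_basis \<epsilon>') x)
     \<longleftrightarrow> (\<forall>w\<in>W. w \<epsilon> = c * w \<epsilon>')"
  using orth_proj_eq_scale_iff[OF assms(1-3)] inner_on_std_basis[OF assms(1)] assms(4,5) by simp

section \<open>The \<open>-2\<close>-eigenspace of a line graph\<close>

definition edge_family :: "'a set set \<Rightarrow> bool" where
  "edge_family E \<longleftrightarrow> finite E \<and> (\<forall>e\<in>E. \<exists>x y. x \<noteq> y \<and> e = {x, y})"

definition vertex_sum :: "'a set set \<Rightarrow> ('a set \<Rightarrow> real) \<Rightarrow> 'a \<Rightarrow> real" where
  "vertex_sum E w u = (\<Sum>e\<in>{e\<in>E. u \<in> e}. w e)"

definition incidence_kernel :: "'a set set \<Rightarrow> ('a set \<Rightarrow> real) set" where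
  "incidence_kernel E = {w. vec_on E w \<and> (\<forall>u. vertex_sum E w u = 0)}"

lemma vertex_sum_add: "vertex_sum E (\<lambda>e. u e + v e) x = vertex_sum E u x + vertex_sum E v x"
  and vertex_sum_diff: "vertex_sum E (\<lambda>e. u e - v e) x = vertex_sum E u x - vertex_sum E v x"
  and vertex_sum_scale: "vertex_sum E (\<lambda>e. c * u e) x = c * vertex_sum E u x"
  unfolding vertex_sum_def by (simp_all add: sum.distrib sum_subtractf sum_distrib_left)

lemma vertex_sum_std_basis:
  assumes "finite E" "e \<in> E"
  shows "vertex_sum E (std_basis e) u = (if u \<in> e then 1 else 0)"
  using assms unfolding vertex_sum_def std_basis_def by (simp add: sum.delta)

lemma fun_subspace_incidence_kernel: "fun_subspace (incidence_kernel E)"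
  unfolding fun_subspace_def incidence_kernel_def vec_on_def
  by (auto simp: vertex_sum_add vertex_sum_scale vertex_sum_def[of _ "\<lambda>_. 0"])

text \<open>The line-graph adjacency matrix is \<open>B\<^sup>T B - 2 I\<close> for the incidence matrix \<open>B\<close>.\<close>
lemma mat_vec_line_adj:
  assumes E: "edge_family E" and e: "e \<in> E" "e = {x, y}" "x \<noteq> y"
  shows "mat_vec E (line_adj E) v e = vertex_sum E v x + vertex_sum E v y - 2 * v e"
proof -
  have fin: "finite E" using E unfolding edge_family_def by auto
  define A where "A = {e'\<in>E. x \<in> e'}"
  define B where "B = {e'\<in>E. y \<in> e'}"
  define C where "C = {e'\<in>E. e' \<noteq> e \<and> e \<inter> e' \<noteq> {}}"
  have "A \<inter> B = {e}"
  proof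
    show "A \<inter> B \<subseteq> {e}"
    proof
      fix e' assume "e' \<in> A \<inter> B"
      moreover obtain p q where "e' = {p, q}" using E \<open>e' \<in> A \<inter> B\<close> unfolding edge_family_def A_def by blast
      ultimately show "e' \<in> {e}" using e unfolding A_def B_def by auto
    qed
  qed (use e in \<open>auto simp: A_def B_def\<close>)
  moreover have "A \<union> B = insert e C" "e \<notin> C" using e unfolding A_def B_def C_def by auto
  moreover have "finite A" "finite B" "finite C" using fin unfolding A_def B_def C_def by auto
  ultimately have "vertex_sum E v x + vertex_sum E v y = sum v C + 2 * v e"
    unfolding vertex_sum_def A_def[symmetric] B_def[symmetric] by (simp add: sum.union_inter[symmetric])
  moreover have "mat_vec E (line_adj E) v e = sum v C"
  proof -
    have "mat_vec E (line_adj E) v e = (\<Sum>e'\<in>E. if e' \<noteq> e \<and> e \<inter> e' \<noteq> {} then v e' else 0)"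
      unfolding mat_vec_def using e(1) by (auto simp: line_adj_def intro!: sum.cong)
    then show ?thesis unfolding C_def by (simp add: sum.inter_filter[OF fin])
  qed
  ultimately show ?thesis by simp
qed

lemma sum_sq_vertex_sum:
  assumes E: "edge_family E"
  shows "(\<Sum>u\<in>\<Union>E. vertex_sum E v u * vertex_sum E v u) = (\<Sum>e\<in>E. v e * (\<Sum>u\<in>e. vertex_sum E v u))"
proof -
  have fin: "finite E" "finite (\<Union>E)" using E unfolding edge_family_def by auto
  have "(\<Sum>e\<in>E. v e * (\<Sum>u\<in>e. vertex_sum E v u)) = (\<Sum>e\<in>E. \<Sum>u\<in>{u\<in>\<Union>E. u \<in> e}. v e * vertex_sum E v u)"
    by (intro sum.cong) (auto simp: sum_distrib_left intro: sum.cong)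
  also have "\<dots> = (\<Sum>u\<in>\<Union>E. \<Sum>e\<in>{e\<in>E. u \<in> e}. v e * vertex_sum E v u)"
    by (rule sum.swap_restrict[OF fin])
  also have "\<dots> = (\<Sum>u\<in>\<Union>E. vertex_sum E v u * vertex_sum E v u)"
    by (simp add: vertex_sum_def sum_distrib_right)
  finally show ?thesis by simp
qed

lemma eigenspace_line_adj_minus_two:
  assumes E: "edge_family E"
  shows "eigenspace_on E (line_adj E) (-2) = incidence_kernel E"
proof -
  have fin: "finite (\<Union>E)" using E unfolding edge_family_def by auto
  have edge_sums: "v \<in> eigenspace_on E (line_adj E) (-2) \<longleftrightarrow>
     vec_on E v \<and> (\<forall>e\<in>E. (\<Sum>u\<in>e. vertex_sum E v u) = 0)" for v
  proof -
    have "mat_vec E (line_adj E) v e = -2 * v e \<longleftrightarrow> (\<Sum>u\<in>e. vertex_sum E v u) = 0" if "e \<in> E" for e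
    proof -
      obtain x y where "x \<noteq> y" "e = {x, y}" using E \<open>e \<in> E\<close> unfolding edge_family_def by blast
      then show ?thesis using mat_vec_line_adj[OF E \<open>e \<in> E\<close>, of x y v] by auto
    qed
    moreover have "mat_vec E (line_adj E) v e = -2 * v e" if "e \<notin> E" "vec_on E v" for e
      using that unfolding mat_vec_def vec_on_def by simp
    ultimately show ?thesis unfolding eigenspace_on_def by (auto simp: fun_eq_iff)
  qed
  have "vertex_sum E v u = 0" if "vec_on E v" "\<forall>e\<in>E. (\<Sum>u\<in>e. vertex_sum E v u) = 0" for v u
  proof (cases "u \<in> \<Union>E")
    case True
    have "(\<Sum>u\<in>\<Union>E. vertex_sum E v u * vertex_sum E v u) = 0"
      using that(2) sum_sq_vertex_sum[OF E, of v] by simp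
    then have "\<forall>u\<in>\<Union>E. vertex_sum E v u * vertex_sum E v u = 0"
      using sum_nonneg_eq_0_iff[OF fin, of "\<lambda>u. vertex_sum E v u * vertex_sum E v u"] by simp
    then show ?thesis using True by (metis mult_eq_0_iff)
  next
    case False
    then have "{e\<in>E. u \<in> e} = {}" by auto
    then show ?thesis unfolding vertex_sum_def by (simp only: sum.empty)
  qed
  moreover have "(\<Sum>u\<in>e. vertex_sum E v u) = 0" if "\<forall>u. vertex_sum E v u = 0" for v and e :: "'a set"
    using that by simp
  ultimately show ?thesis unfolding incidence_kernel_def set_eq_iff mem_Collect_eq edge_sums by blast
qed

lemma line_proj_std_basis_eq_scale_iff:
  assumes "edge_family E" "\<epsilon> \<in> E" "\<epsilon>' \<in> E"
  shows "line_proj E (-2) (std_basis \<epsilon>) = (\<lambda>x. c * line_proj E (-2) (std_basis \<epsilon>') x)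
     \<longleftrightarrow> (\<forall>w\<in>incidence_kernel E. w \<epsilon> = c * w \<epsilon>')"
  unfolding line_proj_def eigenspace_line_adj_minus_two[OF assms(1)]
  using assms fun_subspace_incidence_kernel
  by (intro orth_proj_std_basis_eq_scale_iff) (auto simp: edge_family_def incidence_kernel_def)

lemma line_proj_std_basis_eq_0_iff:
  assumes "edge_family E" "\<epsilon> \<in> E"
  shows "line_proj E (-2) (std_basis \<epsilon>) = (\<lambda>_. 0) \<longleftrightarrow> (\<forall>w\<in>incidence_kernel E. w \<epsilon> = 0)"
  using line_proj_std_basis_eq_scale_iff[OF assms assms(2), of 0] by simp

lemma minus_two_notin_eig_support_iff:
  assumes "edge_family E" "\<epsilon> \<in> E"
  shows "-2 \<notin> eig_support E (std_basis \<epsilon>) \<longleftrightarrow> (\<forall>w\<in>incidence_kernel E. w \<epsilon> = 0)"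
  using line_proj_std_basis_eq_0_iff[OF assms] unfolding eig_support_def by simp

lemma vertex_sum_image:
  assumes "inj f"
  shows "vertex_sum ((`) f ` E) w (f u) = vertex_sum E (\<lambda>e. w (f ` e)) u"
proof -
  have "{e'\<in>(`) f ` E. f u \<in> e'} = (`) f ` {e\<in>E. u \<in> e}"
    using assms by (auto simp: inj_image_mem_iff[OF assms] dest: injD)
  moreover have "inj_on ((`) f) {e\<in>E. u \<in> e}"
    by (intro inj_on_image inj_on_subset[OF assms subset_UNIV])
  ultimately show ?thesis unfolding vertex_sum_def by (simp add: sum.reindex)
qed

lemma incidence_kernel_image:
  assumes "bij f"
  shows "w \<in> incidence_kernel ((`) f ` E) \<longleftrightarrow> (\<lambda>e. w (f ` e)) \<in> incidence_kernel E"
proof -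
  have inj: "inj f" and surj: "surj f" using assms by (simp_all add: bij_is_inj bij_is_surj)
  have "vec_on ((`) f ` E) w \<longleftrightarrow> vec_on E (\<lambda>e. w (f ` e))"
  proof
    assume w: "vec_on ((`) f ` E) w"
    show "vec_on E (\<lambda>e. w (f ` e))"
      unfolding vec_on_def
    proof (intro allI impI)
      fix e assume "e \<notin> E"
      then have "f ` e \<notin> (`) f ` E" by (auto simp: inj_image_eq_iff[OF inj])
      then show "w (f ` e) = 0" using w unfolding vec_on_def by blast
    qed
  next
    assume w: "vec_on E (\<lambda>e. w (f ` e))"
    show "vec_on ((`) f ` E) w"
      unfolding vec_on_def
    proof (intro allI impI)
      fix e' assume "e' \<notin> (`) f ` E"
      moreover have "e' = f ` (inv f ` e')" using surj by (simp add: image_f_inv_f)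
      ultimately show "w e' = 0" using w unfolding vec_on_def by (metis imageI)
    qed
  qed
  moreover have "(\<forall>u'. vertex_sum ((`) f ` E) w u' = 0) \<longleftrightarrow> (\<forall>u. vertex_sum E (\<lambda>e. w (f ` e)) u = 0)"
    using vertex_sum_image[OF inj] surj by (metis surj_f_inv_f)
  ultimately show ?thesis unfolding incidence_kernel_def by simp
qed

lemma is_graph_edge: "is_graph V E \<Longrightarrow> {x, y} \<in> E \<Longrightarrow> x \<noteq> y \<and> x \<in> V \<and> y \<in> V"
  unfolding is_graph_def by (metis doubleton_eq_iff)

lemma is_graph_edge_family: "is_graph V E \<Longrightarrow> edge_family E"
proof -
  assume g: "is_graph V E"
  then have "E \<subseteq> Pow V" "finite V" unfolding is_graph_def by auto
  then have "finite E" by (meson finite_Pow_iff finite_subset)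
  then show ?thesis using g unfolding is_graph_def edge_family_def by blast
qed

lemma vertex_sum_not_vertex: "is_graph V E \<Longrightarrow> u \<notin> V \<Longrightarrow> vertex_sum E w u = 0"
  unfolding is_graph_def vertex_sum_def by (metis (no_types, lifting) empty_iff insert_iff sum.neutral mem_Collect_eq)

lemma pendant_iff:
  assumes "{a, b} \<in> E"
  shows "pendant V E a \<longleftrightarrow> a \<in> V \<and> (\<forall>c. {a, c} \<in> E \<longrightarrow> c = b)"
proof -
  have "card {y. {a, y} \<in> E} = 1 \<longleftrightarrow> {y. {a, y} \<in> E} = {b}"
  proof
    assume "card {y. {a, y} \<in> E} = 1"
    then obtain z where "{y. {a, y} \<in> E} = {z}" by (auto simp: card_1_singleton_iff)
    then show "{y. {a, y} \<in> E} = {b}" using assms by auto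
  qed simp
  also have "\<dots> \<longleftrightarrow> (\<forall>c. {a, c} \<in> E \<longrightarrow> c = b)" using assms by auto
  finally show ?thesis unfolding pendant_def degree_def by simp
qed

lemma pendant_incident_edges:
  assumes "is_graph V E" "pendant V E a" "{a, b} \<in> E"
  shows "{e\<in>E. a \<in> e} = {{a, b}}"
proof -
  have b: "\<forall>c. {a, c} \<in> E \<longrightarrow> c = b" using assms(2) pendant_iff[OF assms(3)] by simp
  have "e = {a, b}" if e: "e \<in> E" "a \<in> e" for e
  proof -
    obtain p q where "e = {p, q}" using assms(1) e(1) unfolding is_graph_def by blast
    then have "e = {a, q} \<or> e = {a, p}" using e(2) by (auto simp: insert_commute)
    then show ?thesis using e(1) b by auto
  qed
  then show ?thesis using assms(3) by blast
qed

lemma incidence_kernel_pendant_edge: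
  assumes "is_graph V E" "pendant V E a" "{a, b} \<in> E" "w \<in> incidence_kernel E"
  shows "w {a, b} = 0"
proof -
  have "vertex_sum E w a = w {a, b}"
    unfolding vertex_sum_def pendant_incident_edges[OF assms(1-3)] by simp
  then show ?thesis using assms(4) unfolding incidence_kernel_def by simp
qed

lemma connected_graph_has_neighbour:
  assumes c: "connected_graph V E" and card: "card V \<ge> 2" and x: "x \<in> V"
  obtains y where "{x, y} \<in> E"
proof -
  obtain z where z: "z \<in> V" "z \<noteq> x"
  proof -
    have "\<not> V \<subseteq> {x}"
    proof
      assume "V \<subseteq> {x}"
      then have "card V \<le> card {x}" by (rule card_mono[rotated]) simp
      then show False using card by simp
    qed
    then show ?thesis using that by blast
  qed
  have "(adj E)\<^sup>*\<^sup>* x z" using c x z unfolding connected_graph_def by auto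
  then show ?thesis
  proof (cases rule: converse_rtranclpE)
    case base
    then show ?thesis using z(2) by simp
  next
    case (step y)
    then show ?thesis using that unfolding adj_def by blast
  qed
qed

lemma connected_graph_K2:
  assumes c: "connected_graph V E" and xy: "{x, y} \<in> E"
    and x: "\<forall>z. {x, z} \<in> E \<longrightarrow> z = y" and y: "\<forall>z. {y, z} \<in> E \<longrightarrow> z = x"
  shows "V = {x, y} \<and> E = {{x, y}}"
proof -
  have g: "is_graph V E" using c unfolding connected_graph_def by auto
  have xyV: "x \<in> V" "y \<in> V" using is_graph_edge[OF g xy] by auto
  have "z \<in> {x, y}" if z: "z \<in> V" for z
  proof -
    have "(adj E)\<^sup>*\<^sup>* x z" using c xyV z unfolding connected_graph_def by auto
    then show ?thesis
    proof (induction rule: rtranclp_induct)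
      case (step z z')
      then have "{z, z'} \<in> E" unfolding adj_def by auto
      show ?case
      proof (cases "z = x")
        case True
        then show ?thesis using x \<open>{z, z'} \<in> E\<close> by blast
      next
        case False
        then show ?thesis using step.IH y \<open>{z, z'} \<in> E\<close> by blast
      qed
    qed simp
  qed
  then have V: "V = {x, y}" using xyV by auto
  have "e = {x, y}" if e: "e \<in> E" for e
  proof -
    obtain p q where "p \<in> V" "q \<in> V" "p \<noteq> q" "e = {p, q}" using g e unfolding is_graph_def by blast
    then show ?thesis unfolding V by (auto simp: insert_commute)
  qed
  then show ?thesis using V xy by blast
qed

section \<open>Cartesian products\<close>

lemma swap_image_eq_iff: "prod.swap ` A = B \<longleftrightarrow> A = prod.swap ` B"
  by (auto simp: image_image)

lemma case_i_swap_iff_swap_base: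
  "case_i_swap V1 E1 V2 E2 \<epsilon>1 \<epsilon>2 \<longleftrightarrow> case_i_base V2 E2 V1 E1 (prod.swap ` \<epsilon>1) (prod.swap ` \<epsilon>2)"
  unfolding case_i_swap_def case_i_base_def swap_image_eq_iff by simp

lemma case_ii_base_iff_swap:
  "case_ii_base V1 E1 V2 E2 \<epsilon>1 \<epsilon>2 \<longleftrightarrow> case_ii_base V2 E2 V1 E1 (prod.swap ` \<epsilon>2) (prod.swap ` \<epsilon>1)"
  unfolding case_ii_base_def swap_image_eq_iff by auto

lemma swap_image_in_cart_E:
  assumes "e \<in> cart_E V1 E1 V2 E2"
  shows "prod.swap ` e \<in> cart_E V2 E2 V1 E1"
proof -
  from assms consider
      (fibre) x y y' where "e = {(x, y), (x, y')}" "x \<in> V1" "{y, y'} \<in> E2"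
    | (layer) x x' y where "e = {(x, y), (x', y)}" "y \<in> V2" "{x, x'} \<in> E1"
    unfolding cart_E_def by blast
  then show ?thesis
  proof cases
    case fibre
    then have "prod.swap ` e = {(y, x), (y', x)}" by simp
    then show ?thesis using fibre(2,3) unfolding cart_E_def by blast
  next
    case layer
    then have "prod.swap ` e = {(y, x), (y, x')}" by simp
    then show ?thesis using layer(2,3) unfolding cart_E_def by blast
  qed
qed

lemma cart_E_swap: "cart_E V2 E2 V1 E1 = (`) prod.swap ` cart_E V1 E1 V2 E2"
proof
  show "cart_E V2 E2 V1 E1 \<subseteq> (`) prod.swap ` cart_E V1 E1 V2 E2"
  proof
    fix e assume "e \<in> cart_E V2 E2 V1 E1"
    then have "prod.swap ` e \<in> cart_E V1 E1 V2 E2" by (rule swap_image_in_cart_E)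
    moreover have "e = prod.swap ` prod.swap ` e" by (simp add: image_image)
    ultimately show "e \<in> (`) prod.swap ` cart_E V1 E1 V2 E2" by blast
  qed
qed (auto intro: swap_image_in_cart_E)

definition square_weighting :: "'a \<Rightarrow> 'a \<Rightarrow> 'b \<Rightarrow> 'b \<Rightarrow> ('a \<times> 'b) set \<Rightarrow> real" where
  "square_weighting x x' y y' = (\<lambda>e.
      std_basis {(x, y), (x, y')} e + std_basis {(x', y), (x', y')} e
    - std_basis {(x, y), (x', y)} e - std_basis {(x, y'), (x', y')} e)"

lemma square_weighting_simps:
  assumes "x \<noteq> x'" "y \<noteq> y'"
  shows "square_weighting x x' y y' {(x, y), (x, y')} = 1" "square_weighting x x' y y' {(x', y), (x', y')} = 1"
    "square_weighting x x' y y' {(x, y), (x', y)} = -1" "square_weighting x x' y y' {(x, y'), (x', y')} = -1"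
  using assms unfolding square_weighting_def std_basis_def by (simp_all add: doubleton_eq_iff)

lemma square_weighting_eq_0:
  assumes "e \<notin> {{(x, y), (x, y')}, {(x', y), (x', y')}, {(x, y), (x', y)}, {(x, y'), (x', y')}}"
  shows "square_weighting x x' y y' e = 0"
  using assms unfolding square_weighting_def std_basis_def by auto

locale graph_product =
  fixes V1 :: "'a set" and E1 :: "'a set set" and V2 :: "'b set" and E2 :: "'b set set"
  assumes graph1: "is_graph V1 E1" and graph2: "is_graph V2 E2"
begin

abbreviation E :: "('a \<times> 'b) set set" where
  "E \<equiv> cart_E V1 E1 V2 E2"

lemma cart_E_cases:
  assumes "e \<in> E"
  obtains (fibre) x y y' where "e = {(x, y), (x, y')}" "x \<in> V1" "{y, y'} \<in> E2"
    | (layer) x x' y where "e = {(x, y), (x', y)}" "y \<in> V2" "{x, x'} \<in> E1"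
  using assms unfolding cart_E_def by blast

lemma fibre_edge_in_cart_E: "x \<in> V1 \<Longrightarrow> {y, y'} \<in> E2 \<Longrightarrow> {(x, y), (x, y')} \<in> E"
  and layer_edge_in_cart_E: "y \<in> V2 \<Longrightarrow> {x, x'} \<in> E1 \<Longrightarrow> {(x, y), (x', y)} \<in> E"
  unfolding cart_E_def by blast+

lemma is_graph_cart_E: "is_graph (V1 \<times> V2) E"
proof -
  have "\<exists>p q. p \<in> V1 \<times> V2 \<and> q \<in> V1 \<times> V2 \<and> p \<noteq> q \<and> e = {p, q}" if "e \<in> E" for e
    using that
  proof (cases rule: cart_E_cases)
    case (fibre x y y')
    then show ?thesis using is_graph_edge[OF graph2 fibre(3)] by blast
  next
    case (layer x x' y)
    then show ?thesis using is_graph_edge[OF graph1 layer(3)] by blast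
  qed
  moreover have "finite (V1 \<times> V2)" using graph1 graph2 unfolding is_graph_def by simp
  ultimately show ?thesis unfolding is_graph_def by blast
qed

lemma edge_family_cart_E: "edge_family E"
  using is_graph_edge_family[OF is_graph_cart_E] .

lemma cart_E_incident_edges:
  assumes "x \<in> V1" "t \<in> V2"
  shows "{e\<in>E. (x, t) \<in> e} =
    (\<lambda>e1. (\<lambda>z. (z, t)) ` e1) ` {e1\<in>E1. x \<in> e1} \<union> (\<lambda>e2. Pair x ` e2) ` {e2\<in>E2. t \<in> e2}"
proof
  show "{e\<in>E. (x, t) \<in> e} \<subseteq> (\<lambda>e1. (\<lambda>z. (z, t)) ` e1) ` {e1\<in>E1. x \<in> e1} \<union> (\<lambda>e2. Pair x ` e2) ` {e2\<in>E2. t \<in> e2}"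
  proof
    fix e assume "e \<in> {e\<in>E. (x, t) \<in> e}"
    then have e: "e \<in> E" "(x, t) \<in> e" by auto
    from e(1) show "e \<in> (\<lambda>e1. (\<lambda>z. (z, t)) ` e1) ` {e1\<in>E1. x \<in> e1} \<union> (\<lambda>e2. Pair x ` e2) ` {e2\<in>E2. t \<in> e2}"
    proof (cases rule: cart_E_cases)
      case (fibre x' y y')
      then have "e = Pair x ` {y, y'}" "t \<in> {y, y'}" using e(2) by auto
      then show ?thesis using fibre(3) by blast
    next
      case (layer x1 x2 y)
      then have "e = (\<lambda>z. (z, t)) ` {x1, x2}" "x \<in> {x1, x2}" using e(2) by auto
      then show ?thesis using layer(3) by blast
    qed
  qed
next
  show "(\<lambda>e1. (\<lambda>z. (z, t)) ` e1) ` {e1\<in>E1. x \<in> e1} \<union> (\<lambda>e2. Pair x ` e2) ` {e2\<in>E2. t \<in> e2} \<subseteq> {e\<in>E. (x, t) \<in> e}"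
  proof (intro subsetI, elim UnE imageE)
    fix e e1 assume "e = (\<lambda>z. (z, t)) ` e1" "e1 \<in> {e1\<in>E1. x \<in> e1}"
    moreover obtain x1 x2 where "e1 = {x1, x2}" using graph1 \<open>e1 \<in> _\<close> unfolding is_graph_def by blast
    ultimately show "e \<in> {e\<in>E. (x, t) \<in> e}" using layer_edge_in_cart_E[OF assms(2)] by auto
  next
    fix e e2 assume "e = Pair x ` e2" "e2 \<in> {e2\<in>E2. t \<in> e2}"
    moreover obtain y1 y2 where "e2 = {y1, y2}" using graph2 \<open>e2 \<in> _\<close> unfolding is_graph_def by blast
    ultimately show "e \<in> {e\<in>E. (x, t) \<in> e}" using fibre_edge_in_cart_E[OF assms(1)] by auto
  qed
qed

lemma vertex_sum_cart_E:
  assumes "x \<in> V1" "t \<in> V2"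
  shows "vertex_sum E w (x, t) =
    vertex_sum E1 (\<lambda>e1. w ((\<lambda>z. (z, t)) ` e1)) x + vertex_sum E2 (\<lambda>e2. w (Pair x ` e2)) t"
proof -
  have fin: "finite E1" "finite E2"
    using is_graph_edge_family[OF graph1] is_graph_edge_family[OF graph2] unfolding edge_family_def by auto
  have disj: "(\<lambda>e1. (\<lambda>z. (z, t)) ` e1) ` {e1\<in>E1. x \<in> e1} \<inter> (\<lambda>e2. Pair x ` e2) ` {e2\<in>E2. t \<in> e2} = {}"
  proof (intro equals0I, elim IntE imageE)
    fix e e1 e2 assume "e = (\<lambda>z. (z, t)) ` e1" "e1 \<in> {e1\<in>E1. x \<in> e1}" "e = Pair x ` e2" "e2 \<in> {e2\<in>E2. t \<in> e2}"
    moreover obtain x1 x2 where "e1 = {x1, x2}" "x1 \<noteq> x2"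
      using graph1 \<open>e1 \<in> _\<close> unfolding is_graph_def by blast
    ultimately have "fst ` e = {x1, x2}" "fst ` e = {x}" by (auto simp: image_image)
    then show False using \<open>x1 \<noteq> x2\<close> by (metis insertI1 insert_commute singletonD)
  qed
  have inj: "inj_on ((`) (\<lambda>z. (z, t))) A" "inj_on ((`) (Pair x)) B" for A B
    by (intro inj_on_image inj_onI; simp)+
  show ?thesis
    unfolding vertex_sum_def cart_E_incident_edges[OF assms]
    using fin disj by (simp add: sum.union_disjoint sum.reindex[OF inj(1)] sum.reindex[OF inj(2)])
qed

lemma incidence_kernel_swap_iff:
  "(\<forall>w\<in>incidence_kernel E. w \<epsilon>1 = c * w \<epsilon>2) \<longleftrightarrow>
   (\<forall>w\<in>incidence_kernel (cart_E V2 E2 V1 E1). w (prod.swap ` \<epsilon>1) = c * w (prod.swap ` \<epsilon>2))"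
proof
  assume H: "\<forall>w\<in>incidence_kernel E. w \<epsilon>1 = c * w \<epsilon>2"
  show "\<forall>w\<in>incidence_kernel (cart_E V2 E2 V1 E1). w (prod.swap ` \<epsilon>1) = c * w (prod.swap ` \<epsilon>2)"
  proof
    fix w assume "w \<in> incidence_kernel (cart_E V2 E2 V1 E1)"
    then have "(\<lambda>e. w (prod.swap ` e)) \<in> incidence_kernel E"
      unfolding cart_E_swap[of V2 E2 V1 E1] by (rule incidence_kernel_image[OF bij_swap, THEN iffD1])
    from H[rule_format, OF this] show "w (prod.swap ` \<epsilon>1) = c * w (prod.swap ` \<epsilon>2)" .
  qed
next
  assume H: "\<forall>w\<in>incidence_kernel (cart_E V2 E2 V1 E1). w (prod.swap ` \<epsilon>1) = c * w (prod.swap ` \<epsilon>2)"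
  show "\<forall>w\<in>incidence_kernel E. w \<epsilon>1 = c * w \<epsilon>2"
  proof
    fix w assume "w \<in> incidence_kernel E"
    then have "(\<lambda>e. w (prod.swap ` e)) \<in> incidence_kernel (cart_E V2 E2 V1 E1)"
      unfolding cart_E_swap[of V2 E2 V1 E1] by (intro incidence_kernel_image[OF bij_swap, THEN iffD2]) (simp add: image_image)
    from H[rule_format, OF this] show "w \<epsilon>1 = c * w \<epsilon>2" by (simp add: image_image)
  qed
qed

lemma square_weighting_in_kernel:
  assumes xx: "{x, x'} \<in> E1" and yy: "{y, y'} \<in> E2"
  shows "square_weighting x x' y y' \<in> incidence_kernel E"
proof -
  have x: "x \<noteq> x'" "x \<in> V1" "x' \<in> V1" using is_graph_edge[OF graph1 xx] by auto
  have y: "y \<noteq> y'" "y \<in> V2" "y' \<in> V2" using is_graph_edge[OF graph2 yy] by auto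
  have edges: "{(x, y), (x, y')} \<in> E" "{(x', y), (x', y')} \<in> E" "{(x, y), (x', y)} \<in> E" "{(x, y'), (x', y')} \<in> E"
    using fibre_edge_in_cart_E layer_edge_in_cart_E x y xx yy by (auto simp: insert_commute)
  have fin: "finite E" using edge_family_cart_E unfolding edge_family_def by simp
  have "vertex_sum E (square_weighting x x' y y') (p, q) = 0" for p q
    unfolding square_weighting_def vertex_sum_diff vertex_sum_add vertex_sum_std_basis[OF fin edges(1)]
      vertex_sum_std_basis[OF fin edges(2)] vertex_sum_std_basis[OF fin edges(3)] vertex_sum_std_basis[OF fin edges(4)]
    using x(1) y(1) by (cases "p = x"; cases "p = x'"; cases "q = y"; cases "q = y'") simp_all
  moreover have "vec_on E (square_weighting x x' y y')"
    unfolding vec_on_def square_weighting_def std_basis_def using edges by auto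
  ultimately show ?thesis unfolding incidence_kernel_def by auto
qed

definition layer_lift :: "'b \<Rightarrow> ('a set \<Rightarrow> real) \<Rightarrow> ('a \<times> 'b) set \<Rightarrow> real" where
  "layer_lift y w1 e = (if e \<in> E \<and> snd ` e = {y} then w1 (fst ` e) else 0)"

lemma layer_lift_layer:
  assumes "e1 \<in> E1" "t \<in> V2"
  shows "layer_lift y w1 ((\<lambda>z. (z, t)) ` e1) = (if t = y then w1 e1 else 0)"
proof -
  obtain p q where "e1 = {p, q}" using graph1 assms(1) unfolding is_graph_def by blast
  then show ?thesis using layer_edge_in_cart_E[OF assms(2)] assms(1)
    unfolding layer_lift_def by (auto simp: image_image)
qed

lemma layer_lift_fibre:
  assumes "e2 \<in> E2"
  shows "layer_lift y w1 (Pair x ` e2) = 0"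
proof -
  obtain p q where "e2 = {p, q}" "p \<noteq> q" using graph2 assms unfolding is_graph_def by blast
  then have "snd ` Pair x ` e2 \<noteq> {y}" by (auto simp: image_image)
  then show ?thesis unfolding layer_lift_def by simp
qed

lemma layer_lift_in_kernel:
  assumes "w1 \<in> incidence_kernel E1"
  shows "layer_lift y w1 \<in> incidence_kernel E"
proof -
  have "vertex_sum E (layer_lift y w1) (x, t) = 0" for x t
  proof (cases "x \<in> V1 \<and> t \<in> V2")
    case True
    then have "vertex_sum E (layer_lift y w1) (x, t) = vertex_sum E1 (\<lambda>e1. if t = y then w1 e1 else 0) x"
      unfolding vertex_sum_cart_E[OF conjunct1[OF True] conjunct2[OF True]]
      by (simp add: vertex_sum_def layer_lift_layer layer_lift_fibre)
    also have "\<dots> = (if t = y then vertex_sum E1 w1 x else 0)" unfolding vertex_sum_def by simp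
    also have "\<dots> = 0" using assms unfolding incidence_kernel_def by simp
    finally show ?thesis .
  qed (use vertex_sum_not_vertex[OF is_graph_cart_E] in auto)
  moreover have "vec_on E (layer_lift y w1)" unfolding vec_on_def layer_lift_def by auto
  ultimately show ?thesis unfolding incidence_kernel_def by auto
qed

definition layer_difference :: "'b \<Rightarrow> 'b \<Rightarrow> (('a \<times> 'b) set \<Rightarrow> real) \<Rightarrow> 'a set \<Rightarrow> real" where
  "layer_difference u v w e1 = (if e1 \<in> E1 then w ((\<lambda>z. (z, u)) ` e1) - w ((\<lambda>z. (z, v)) ` e1) else 0)"

lemma layer_difference_in_kernel:
  assumes V2: "V2 = {u, v}" and E2: "E2 = {{u, v}}" and w: "w \<in> incidence_kernel E"
  shows "layer_difference u v w \<in> incidence_kernel E1"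
proof -
  have "vertex_sum E1 (layer_difference u v w) x = 0" for x
  proof (cases "x \<in> V1")
    case True
    have "vertex_sum E1 (\<lambda>e1. w ((\<lambda>z. (z, t)) ` e1)) x = - w (Pair x ` {u, v})" if "t \<in> {u, v}" for t
    proof -
      have "{e2\<in>E2. t \<in> e2} = {{u, v}}" using that unfolding E2 by auto
      then have "vertex_sum E2 (\<lambda>e2. w (Pair x ` e2)) t = w (Pair x ` {u, v})"
        unfolding vertex_sum_def by simp
      moreover have "vertex_sum E w (x, t) = 0" using w unfolding incidence_kernel_def by simp
      ultimately show ?thesis using vertex_sum_cart_E[OF True, of t w] that V2 by simp
    qed
    moreover have "vertex_sum E1 (layer_difference u v w) x =
        vertex_sum E1 (\<lambda>e1. w ((\<lambda>z. (z, u)) ` e1)) x - vertex_sum E1 (\<lambda>e1. w ((\<lambda>z. (z, v)) ` e1)) x"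
      unfolding vertex_sum_def layer_difference_def by (simp add: sum_subtractf)
    ultimately show ?thesis by simp
  qed (use vertex_sum_not_vertex[OF graph1] in auto)
  moreover have "vec_on E1 (layer_difference u v w)" unfolding vec_on_def layer_difference_def by auto
  ultimately show ?thesis unfolding incidence_kernel_def by auto
qed

lemma kernel_proportional_partner_in_square:
  assumes "{x, x'} \<in> E1" "{y, y'} \<in> E2" "\<forall>w\<in>incidence_kernel E. w \<epsilon>1 = c * w \<epsilon>2"
    and "square_weighting x x' y y' \<epsilon>1 \<noteq> 0"
  shows "\<epsilon>2 \<in> {{(x, y), (x, y')}, {(x', y), (x', y')}, {(x, y), (x', y)}, {(x, y'), (x', y')}}"
proof (rule ccontr)
  assume "\<not> ?thesis"
  then have "square_weighting x x' y y' \<epsilon>2 = 0" by (rule square_weighting_eq_0)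
  then show False using assms square_weighting_in_kernel by fastforce
qed

lemma layer_edge_case_ii:
  assumes xx: "{x, x'} \<in> E1" and yb: "{y, b} \<in> E2" and y: "pendant V2 E2 y" and "c \<noteq> 0"
    and H: "\<forall>w\<in>incidence_kernel E. w {(x, y), (x', y)} = c * w {(x, y), (x, b)}"
  shows "case_ii_base V1 E1 V2 E2 {(x, y), (x, b)} {(x, y), (x', y)}"
proof -
  have "x \<noteq> x'" "x \<in> V1" "y \<noteq> b" using is_graph_edge[OF graph1 xx] is_graph_edge[OF graph2 yb] by auto
  have "z = x'" if xz: "{x, z} \<in> E1" for z
  proof (rule ccontr)
    assume "z \<noteq> x'"
    moreover have "x \<noteq> z" using is_graph_edge[OF graph1 xz] by simp
    ultimately have "square_weighting x z y b {(x, y), (x', y)} = 0" "square_weighting x z y b {(x, y), (x, b)} = 1"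
      using \<open>x \<noteq> x'\<close> \<open>y \<noteq> b\<close> by (auto intro: square_weighting_eq_0 simp: square_weighting_simps doubleton_eq_iff)
    then show False using H square_weighting_in_kernel[OF xz yb] \<open>c \<noteq> 0\<close> by force
  qed
  then have x: "pendant V1 E1 x" using pendant_iff[OF xx] \<open>x \<in> V1\<close> by blast
  have "-2 \<notin> eig_support E1 (std_basis {x, x'})" "-2 \<notin> eig_support E2 (std_basis {y, b})"
    using minus_two_notin_eig_support_iff is_graph_edge_family graph1 graph2 xx yb
      incidence_kernel_pendant_edge[OF graph1 x xx] incidence_kernel_pendant_edge[OF graph2 y yb] by blast+
  then show ?thesis unfolding case_ii_base_def using x xx y yb by blast
qed

lemma layer_edge_case_i:
  assumes conn: "connected_graph V2 E2" and xx: "{x, x'} \<in> E1" and yb: "{y, b} \<in> E2"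
    and y: "pendant V2 E2 y" and "c \<noteq> 0"
    and H: "\<forall>w\<in>incidence_kernel E. w {(x, y), (x', y)} = c * w {(x, b), (x', b)}"
  shows "case_i_base V1 E1 V2 E2 {(x, y), (x', y)} {(x, b), (x', b)}"
proof -
  have "x \<noteq> x'" "y \<noteq> b" "y \<in> V2" "b \<in> V2"
    using is_graph_edge[OF graph1 xx] is_graph_edge[OF graph2 yb] by auto
  have "w1 {x, x'} = 0" if "w1 \<in> incidence_kernel E1" for w1
    using H[rule_format, OF layer_lift_in_kernel[OF that, of y]] layer_lift_layer[OF xx]
      \<open>y \<in> V2\<close> \<open>b \<in> V2\<close> not_sym[OF \<open>y \<noteq> b\<close>] by simp
  then have support: "-2 \<notin> eig_support E1 (std_basis {x, x'})"
    using minus_two_notin_eig_support_iff[OF is_graph_edge_family[OF graph1] xx] by blast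
  have "z = y" if bz: "{b, z} \<in> E2" for z
  proof (rule ccontr)
    assume "z \<noteq> y"
    moreover have "b \<noteq> z" using is_graph_edge[OF graph2 bz] by simp
    ultimately have "square_weighting x x' b z {(x, y), (x', y)} = 0"
      "square_weighting x x' b z {(x, b), (x', b)} = -1"
      using \<open>x \<noteq> x'\<close> \<open>y \<noteq> b\<close>
      by (auto intro: square_weighting_eq_0 simp: square_weighting_simps doubleton_eq_iff)
    then show False using H square_weighting_in_kernel[OF xx bz] \<open>c \<noteq> 0\<close> by force
  qed
  then have "V2 = {y, b} \<and> E2 = {{y, b}}"
    using connected_graph_K2[OF conn yb] y pendant_iff[OF yb] by blast
  then show ?thesis unfolding case_i_base_def using \<open>y \<noteq> b\<close> xx support by blast
qed

lemma layer_edge_forward: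
  assumes conn: "connected_graph V2 E2" "card V2 \<ge> 2"
    and xx: "{x, x'} \<in> E1" and y: "y \<in> V2" and ne: "\<epsilon>2 \<noteq> {(x, y), (x', y)}" and "c \<noteq> 0"
    and H: "\<forall>w\<in>incidence_kernel E. w {(x, y), (x', y)} = c * w \<epsilon>2"
  shows "case_i_base V1 E1 V2 E2 {(x, y), (x', y)} \<epsilon>2 \<or> case_ii_base V1 E1 V2 E2 \<epsilon>2 {(x, y), (x', y)}"
proof -
  have "x \<noteq> x'" using is_graph_edge[OF graph1 xx] by simp
  have partner: "\<epsilon>2 \<in> {{(x, z), (x', z)}, {(x, y), (x, z)}, {(x', y), (x', z)}}" if yz: "{y, z} \<in> E2" for z
  proof -
    have "y \<noteq> z" using is_graph_edge[OF graph2 yz] by simp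
    then have "square_weighting x x' y z {(x, y), (x', y)} \<noteq> 0" using \<open>x \<noteq> x'\<close> by (simp add: square_weighting_simps)
    then show ?thesis using kernel_proportional_partner_in_square[OF xx yz H] ne by auto
  qed
  obtain b where yb: "{y, b} \<in> E2" using connected_graph_has_neighbour[OF conn y] .
  have "y \<noteq> b" using is_graph_edge[OF graph2 yb] by simp
  have y_pendant: "pendant V2 E2 y"
    unfolding pendant_iff[OF yb]
  proof (intro conjI y allI impI)
    fix z assume yz: "{y, z} \<in> E2"
    have "y \<noteq> z" using is_graph_edge[OF graph2 yz] by simp
    from partner[OF yb] partner[OF yz] show "z = b"
      using \<open>x \<noteq> x'\<close> \<open>y \<noteq> b\<close> \<open>y \<noteq> z\<close> by (auto simp: doubleton_eq_iff)
  qed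
  from partner[OF yb] consider "\<epsilon>2 = {(x, b), (x', b)}" | "\<epsilon>2 = {(x, y), (x, b)}" | "\<epsilon>2 = {(x', y), (x', b)}"
    by blast
  then show ?thesis
  proof cases
    case 1
    then show ?thesis using layer_edge_case_i[OF conn(1) xx yb y_pendant \<open>c \<noteq> 0\<close>] H by simp
  next
    case 2
    then show ?thesis using layer_edge_case_ii[OF xx yb y_pendant \<open>c \<noteq> 0\<close>] H by simp
  next
    case 3
    have "{x', x} \<in> E1" "{(x, y), (x', y)} = {(x', y), (x, y)}" using xx by (simp_all add: insert_commute)
    then show ?thesis using layer_edge_case_ii[OF _ yb y_pendant \<open>c \<noteq> 0\<close>, of x' x] H 3 by simp
  qed
qed

lemma kernel_proportional_imp_cases:
  assumes conn: "connected_graph V1 E1" "card V1 \<ge> 2" "connected_graph V2 E2" "card V2 \<ge> 2"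
    and \<epsilon>1: "\<epsilon>1 \<in> E" and ne: "\<epsilon>1 \<noteq> \<epsilon>2" and "c \<noteq> 0"
    and H: "\<forall>w\<in>incidence_kernel E. w \<epsilon>1 = c * w \<epsilon>2"
  shows "case_i V1 E1 V2 E2 \<epsilon>1 \<epsilon>2 \<or> case_ii V1 E1 V2 E2 \<epsilon>1 \<epsilon>2"
  using \<epsilon>1
proof (cases rule: cart_E_cases)
  case (layer x x' y)
  then have "case_i_base V1 E1 V2 E2 \<epsilon>1 \<epsilon>2 \<or> case_ii_base V1 E1 V2 E2 \<epsilon>2 \<epsilon>1"
    using layer_edge_forward[OF conn(3,4) layer(3,2) _ \<open>c \<noteq> 0\<close>] ne H by simp
  then show ?thesis unfolding case_i_def case_ii_def by blast
next
  case (fibre x y y')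
  interpret swapped: graph_product V2 E2 V1 E1 using graph1 graph2 by unfold_locales
  have "prod.swap ` \<epsilon>1 = {(y, x), (y', x)}" using fibre(1) by simp
  moreover have "prod.swap ` \<epsilon>2 \<noteq> prod.swap ` \<epsilon>1" using ne by (simp add: inj_image_eq_iff)
  ultimately
  have "case_i_base V2 E2 V1 E1 (prod.swap ` \<epsilon>1) (prod.swap ` \<epsilon>2)
      \<or> case_ii_base V2 E2 V1 E1 (prod.swap ` \<epsilon>2) (prod.swap ` \<epsilon>1)"
    using swapped.layer_edge_forward[OF conn(1,2) fibre(3,2) _ \<open>c \<noteq> 0\<close>] H[unfolded incidence_kernel_swap_iff]
    by simp
  then show ?thesis
    unfolding case_i_def case_ii_def case_i_swap_iff_swap_base case_ii_base_iff_swap[of V1 E1 V2 E2] by blast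
qed

lemma case_i_base_kernel:
  assumes "case_i_base V1 E1 V2 E2 \<epsilon>1 \<epsilon>2"
  shows "\<forall>w\<in>incidence_kernel E. w \<epsilon>1 = w \<epsilon>2"
proof
  fix w assume w: "w \<in> incidence_kernel E"
  obtain u v a b where h: "u \<noteq> v" "V2 = {u, v}" "E2 = {{u, v}}" "{a, b} \<in> E1"
    "-2 \<notin> eig_support E1 (std_basis {a, b})" "\<epsilon>1 = {(a, u), (b, u)}" "\<epsilon>2 = {(a, v), (b, v)}"
    using assms unfolding case_i_base_def by blast
  have "layer_difference u v w {a, b} = 0"
    using layer_difference_in_kernel[OF h(2,3) w] h(5)
      minus_two_notin_eig_support_iff[OF is_graph_edge_family[OF graph1] h(4)] by blast
  then show "w \<epsilon>1 = w \<epsilon>2" using h(4,6,7) unfolding layer_difference_def by simp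
qed

lemma case_i_kernel:
  assumes "case_i V1 E1 V2 E2 \<epsilon>1 \<epsilon>2"
  shows "\<forall>w\<in>incidence_kernel E. w \<epsilon>1 = w \<epsilon>2"
proof -
  interpret swapped: graph_product V2 E2 V1 E1 using graph1 graph2 by unfold_locales
  have swap: "\<forall>w\<in>incidence_kernel E. w \<epsilon> = w \<epsilon>'" if "case_i_swap V1 E1 V2 E2 \<epsilon> \<epsilon>'" for \<epsilon> \<epsilon>'
  proof -
    have "case_i_base V2 E2 V1 E1 (prod.swap ` \<epsilon>) (prod.swap ` \<epsilon>')"
      using that unfolding case_i_swap_iff_swap_base .
    then show ?thesis using swapped.case_i_base_kernel incidence_kernel_swap_iff[of \<epsilon> 1 \<epsilon>'] by simp
  qed
  show ?thesis using assms case_i_base_kernel swap unfolding case_i_def by (metis (no_types, lifting))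
qed

text \<open>The vertex \<open>(a, \<alpha>)\<close> is incident with exactly the two edges \<open>\<epsilon>\<^sub>1\<close> and \<open>\<epsilon>\<^sub>2\<close>.\<close>
lemma case_ii_base_kernel:
  assumes "case_ii_base V1 E1 V2 E2 \<epsilon>1 \<epsilon>2"
  shows "\<forall>w\<in>incidence_kernel E. w \<epsilon>1 = - w \<epsilon>2"
proof
  fix w assume w: "w \<in> incidence_kernel E"
  obtain a b \<alpha> \<beta> where h: "pendant V1 E1 a" "{a, b} \<in> E1" "pendant V2 E2 \<alpha>" "{\<alpha>, \<beta>} \<in> E2"
    "\<epsilon>1 = {(a, \<alpha>), (a, \<beta>)}" "\<epsilon>2 = {(a, \<alpha>), (b, \<alpha>)}"
    using assms unfolding case_ii_base_def by blast
  have "a \<in> V1" "\<alpha> \<in> V2" using h(1,3) unfolding pendant_def by auto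
  have "vertex_sum E w (a, \<alpha>) = w \<epsilon>2 + w \<epsilon>1"
    unfolding vertex_sum_cart_E[OF \<open>a \<in> V1\<close> \<open>\<alpha> \<in> V2\<close>]
    by (simp add: vertex_sum_def pendant_incident_edges[OF graph1 h(1,2)]
      pendant_incident_edges[OF graph2 h(3,4)] h(5,6))
  then show "w \<epsilon>1 = - w \<epsilon>2" using w unfolding incidence_kernel_def by simp
qed

lemma case_ii_kernel:
  assumes "case_ii V1 E1 V2 E2 \<epsilon>1 \<epsilon>2"
  shows "\<forall>w\<in>incidence_kernel E. w \<epsilon>1 = - w \<epsilon>2"
  using assms case_ii_base_kernel unfolding case_ii_def by force

lemma incidence_kernel_nonzero_at:
  assumes "connected_graph V1 E1" "card V1 \<ge> 2" "connected_graph V2 E2" "card V2 \<ge> 2" "\<epsilon> \<in> E"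
  shows "\<exists>w\<in>incidence_kernel E. w \<epsilon> \<noteq> 0"
  using assms(5)
proof (cases rule: cart_E_cases)
  case (fibre x y y')
  obtain x' where xx: "{x, x'} \<in> E1" using connected_graph_has_neighbour[OF assms(1,2) fibre(2)] .
  have "x \<noteq> x'" "y \<noteq> y'" using is_graph_edge[OF graph1 xx] is_graph_edge[OF graph2 fibre(3)] by auto
  then have "square_weighting x x' y y' \<epsilon> = 1" using fibre(1) by (simp add: square_weighting_simps)
  then show ?thesis using square_weighting_in_kernel[OF xx fibre(3)] by (intro bexI) simp_all
next
  case (layer x x' y)
  obtain y' where yy: "{y, y'} \<in> E2" using connected_graph_has_neighbour[OF assms(3,4) layer(2)] .
  have "x \<noteq> x'" "y \<noteq> y'" using is_graph_edge[OF graph1 layer(3)] is_graph_edge[OF graph2 yy] by auto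
  then have "square_weighting x x' y y' \<epsilon> = -1" using layer(1) by (simp add: square_weighting_simps)
  then show ?thesis using square_weighting_in_kernel[OF layer(3) yy] by (intro bexI) simp_all
qed

end

theorem mainTheorem17:
  fixes V1 :: "'a set" and E1 :: "'a set set" and V2 :: "'b set" and E2 :: "'b set set"
    and \<epsilon>1 \<epsilon>2 :: "('a \<times> 'b) set"
  assumes "connected_graph V1 E1" and "connected_graph V2 E2"
    and "card V1 \<ge> 2" and "card V2 \<ge> 2"
    and "\<epsilon>1 \<in> cart_E V1 E1 V2 E2" and "\<epsilon>2 \<in> cart_E V1 E1 V2 E2" and "\<epsilon>1 \<noteq> \<epsilon>2"
  defines "F \<equiv> (\<lambda>\<epsilon>. line_proj (cart_E V1 E1 V2 E2) (-2) (std_basis \<epsilon>))"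
  shows "((F \<epsilon>1 = F \<epsilon>2 \<or> F \<epsilon>1 = (\<lambda>x. - F \<epsilon>2 x)) \<longleftrightarrow>
            (case_i V1 E1 V2 E2 \<epsilon>1 \<epsilon>2 \<or> case_ii V1 E1 V2 E2 \<epsilon>1 \<epsilon>2))
       \<and> (case_i V1 E1 V2 E2 \<epsilon>1 \<epsilon>2 \<longrightarrow> F \<epsilon>1 = F \<epsilon>2 \<and> F \<epsilon>1 \<noteq> (\<lambda>_. 0))
       \<and> (case_ii V1 E1 V2 E2 \<epsilon>1 \<epsilon>2 \<longrightarrow> F \<epsilon>1 = (\<lambda>x. - F \<epsilon>2 x) \<and> F \<epsilon>1 \<noteq> (\<lambda>_. 0))"
proof -
  interpret graph_product V1 E1 V2 E2
    using assms(1,2) unfolding connected_graph_def by unfold_locales auto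
  have ratio: "F \<epsilon>1 = (\<lambda>x. c * F \<epsilon>2 x) \<longleftrightarrow> (\<forall>w\<in>incidence_kernel E. w \<epsilon>1 = c * w \<epsilon>2)" for c
    unfolding F_def by (rule line_proj_std_basis_eq_scale_iff[OF edge_family_cart_E assms(5,6)])
  have same: "F \<epsilon>1 = F \<epsilon>2 \<longleftrightarrow> (\<forall>w\<in>incidence_kernel E. w \<epsilon>1 = w \<epsilon>2)"
    using ratio[of 1] by simp
  have opposite: "F \<epsilon>1 = (\<lambda>x. - F \<epsilon>2 x) \<longleftrightarrow> (\<forall>w\<in>incidence_kernel E. w \<epsilon>1 = - w \<epsilon>2)"
    using ratio[of "-1"] by simp
  have "F \<epsilon>1 \<noteq> (\<lambda>_. 0)"
    using line_proj_std_basis_eq_0_iff[OF edge_family_cart_E assms(5)]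
      incidence_kernel_nonzero_at[OF assms(1,3,2,4,5)] unfolding F_def by auto
  moreover have "case_i V1 E1 V2 E2 \<epsilon>1 \<epsilon>2 \<or> case_ii V1 E1 V2 E2 \<epsilon>1 \<epsilon>2"
    if "F \<epsilon>1 = F \<epsilon>2 \<or> F \<epsilon>1 = (\<lambda>x. - F \<epsilon>2 x)"
    using that kernel_proportional_imp_cases[OF assms(1,3,2,4,5,7), of 1] kernel_proportional_imp_cases[OF assms(1,3,2,4,5,7), of "-1"]
    unfolding same opposite by auto
  ultimately show ?thesis using same opposite case_i_kernel case_ii_kernel by blast
qed

end
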